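(* Let $N,w,h$ be positive integers with $w\geq 2$ and $N/h\leq w\leq N-h+1$. Let $$f_N(w,h)=\max\Big\{\sum_{l=1}^{|\Lambda|}N_l^2\ :\ \Lambda \text{ a partition of }\{1,\dots,N\}\text{ with }\max\Lambda\leq w,\ |\Lambda|\geq h\Big\}.$$ Then $f_N(w,h)=kw^2+u^2+v$, where $k=\left\lfloor\frac{N-h}{w-1}\right\rfloor$, $u=N-h+1-(w-1)k$, and $v=h-k-1$.
   Context: A partition $\Lambda=\{A_1,\dots,A_{|\Lambda|}\}$ of $\{1,\dots,N\}$ is a collection of nonempty pairwise disjoint subsets whose union is $\{1,\dots,N\}$; $|\Lambda|$ is the number of subsets, $N_l=|A_l|$, and $\max\Lambda=\max_lN_l$. *)

theory Defs
  imports Complex_Main "HOL-Library.Disjoint_Sets"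
begin

definition f_part :: "nat \<Rightarrow> nat \<Rightarrow> nat \<Rightarrow> nat" where
  "f_part N w h = Max {(\<Sum>B\<in>P. card B ^ 2) | P.
      partition_on {1..N} P \<and> (\<forall>B\<in>P. card B \<le> w) \<and> h \<le> card P}"

end

theory Submission
  imports Defs
begin

text \<open>Write each block size as \<open>1 + y\<close> with \<open>0 \<le> y \<le> c = w - 1\<close>. Then
  \<open>\<Sum>y = N - |\<Lambda>|\<close> and \<open>\<Sum>N\<^sub>l\<^sup>2 = \<Sum>y\<^sup>2 + 2N - |\<Lambda>|\<close>. Among numbers \<open>y \<le> c\<close> with a given sum \<open>a\<close>,
  the sum of squares is largest when as many as possible equal \<open>c\<close> (moving mass from a smaller
  to a larger summand increases it), giving \<open>(a div c) c\<^sup>2 + (a mod c)\<^sup>2\<close>; this bound grows with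
  \<open>a\<close>, so the optimum uses exactly \<open>h\<close> blocks: \<open>k\<close> of size \<open>w\<close>, one of size \<open>u\<close> and \<open>v\<close>
  singletons.\<close>

definition max_sq_sum :: "nat \<Rightarrow> nat \<Rightarrow> nat" where
  "max_sq_sum c a = (a div c) * c^2 + (a mod c)^2"

lemma max_sq_sum_add_sq:
  assumes c: "c > 0" and b: "b \<le> c"
  shows "max_sq_sum c a + b^2 \<le> max_sq_sum c (a + b)"
proof -
  define q where "q = a div c"
  define r where "r = a mod c"
  have a: "a = q*c + r" and rc: "r < c" unfolding q_def r_def using c by simp_all
  show ?thesis
  proof (cases "r + b < c")
    case True
    have ab: "a + b = (r + b) + q * c" unfolding a by simp
    have "(a + b) div c = q" "(a + b) mod c = r + b"
      unfolding ab using True by simp_all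
    then show ?thesis
      unfolding max_sq_sum_def q_def[symmetric] r_def[symmetric] by (simp add: power2_sum)
  next
    case False
    define s where "s = r + b - c"
    have s: "s < c" "s \<le> b" using False rc b unfolding s_def by auto
    have ab: "a + b = s + (q + 1) * c" using False unfolding a s_def by simp
    have "(a + b) div c = q + 1" "(a + b) mod c = s"
      unfolding ab using s(1) c by (simp_all only: div_mult_self1 mod_mult_self1) simp_all
    moreover have "r^2 + b^2 \<le> c^2 + s^2"
    proof -
      define d where "d = c - b"
      have r: "r = s + d" and cd: "c = b + d" using False b unfolding s_def d_def by auto
      have "s * d \<le> b * d" using s by simp
      then show ?thesis unfolding r cd by (simp add: power2_sum)
    qed
    ultimately show ?thesis unfolding max_sq_sum_def q_def[symmetric] r_def[symmetric]
      by (simp add: algebra_simps)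
  qed
qed

lemma max_sq_sum_mono:
  assumes "c > 0" "a \<le> a'"
  shows "max_sq_sum c a \<le> max_sq_sum c a'"
proof (rule lift_Suc_mono_le[of "max_sq_sum c", OF _ \<open>a \<le> a'\<close>])
  show "max_sq_sum c n \<le> max_sq_sum c (Suc n)" for n
    using \<open>c > 0\<close> max_sq_sum_add_sq[OF \<open>c > 0\<close>, of 1 n] by simp
qed

lemma sum_squares_le_max_sq_sum:
  assumes "finite P" "c > 0" "\<And>x. x \<in> P \<Longrightarrow> y x \<le> c"
  shows "(\<Sum>x\<in>P. y x ^ 2) \<le> max_sq_sum c (\<Sum>x\<in>P. y x)"
  using assms
proof (induction P rule: finite_induct)
  case empty
  then show ?case by (simp add: max_sq_sum_def)
next
  case (insert x F)
  then have "(\<Sum>x\<in>insert x F. y x ^ 2) \<le> max_sq_sum c (\<Sum>x\<in>F. y x) + y x ^ 2"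
    by simp
  also have "\<dots> \<le> max_sq_sum c ((\<Sum>x\<in>F. y x) + y x)"
    using insert by (simp add: max_sq_sum_add_sq)
  finally show ?case using insert by (simp add: add.commute)
qed

lemma max_sq_sum_attained:
  assumes "a \<le> c * m"
  shows "\<exists>ys. length ys = m \<and> (\<forall>y\<in>set ys. y \<le> c) \<and> sum_list ys = a
           \<and> (\<Sum>y\<leftarrow>ys. y^2) = max_sq_sum c a"
  using assms
proof (induction m arbitrary: a)
  case 0
  then show ?case by (simp add: max_sq_sum_def)
next
  case (Suc m)
  define b where "b = min a c"
  have "a - b \<le> c * m" using Suc.prems unfolding b_def by (auto simp: min_def)
  then obtain ys where ys: "length ys = m" "\<forall>y\<in>set ys. y \<le> c" "sum_list ys = a - b"
    "(\<Sum>y\<leftarrow>ys. y^2) = max_sq_sum c (a - b)"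
    using Suc.IH by blast
  have "max_sq_sum c a = b^2 + max_sq_sum c (a - b)"
  proof (cases "a < c")
    case True
    then show ?thesis unfolding b_def max_sq_sum_def by simp
  next
    case False
    then have "a div c = Suc ((a - c) div c)" "a mod c = (a - c) mod c" if "c > 0"
      using that by (simp_all add: le_div_geq le_mod_geq)
    then show ?thesis using False unfolding b_def max_sq_sum_def
      by (cases "c = 0") (simp_all add: power2_eq_square)
  qed
  then show ?case using ys by (intro exI[of _ "b # ys"]) (auto simp: b_def)
qed

lemma partition_of_block_sizes:
  fixes g :: "nat \<Rightarrow> 'a::comm_monoid_add"
  assumes "\<forall>x\<in>set xs. x > 0"
  shows "\<exists>P. partition_on {1..sum_list xs} P \<and> card P = length xs
           \<and> (\<forall>B\<in>P. card B \<in> set xs) \<and> (\<Sum>B\<in>P. g (card B)) = (\<Sum>x\<leftarrow>xs. g x)"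
  using assms
proof (induction xs)
  case Nil
  then show ?case by (auto simp: partition_on_empty)
next
  case (Cons x xs)
  then obtain P where P: "partition_on {1..sum_list xs} P" "card P = length xs"
    "\<forall>B\<in>P. card B \<in> set xs" "(\<Sum>B\<in>P. g (card B)) = (\<Sum>x\<leftarrow>xs. g x)"
    by auto
  define S where "S = sum_list xs"
  define B where "B = {S+1..S+x}"
  have "finite P" using P(1) finite_elements by blast
  have "\<Union>P = {1..S}" using partition_onD1[OF P(1)] unfolding S_def by simp
  then have "disjnt B (\<Union>P)" unfolding B_def disjnt_def by auto
  moreover have "B \<noteq> {}" using Cons.prems unfolding B_def by auto
  ultimately have "B \<notin> P" by (auto simp: disjnt_def)
  have "partition_on {1..sum_list (x # xs)} (insert B P)"
  proof (subst partition_on_insert[OF \<open>disjnt B (\<Union>P)\<close>], intro conjI)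
    have "{1..sum_list (x # xs)} - B = {1..S}" unfolding B_def S_def by auto
    then show "partition_on ({1..sum_list (x # xs)} - B) P" using P(1) S_def by simp
    show "B \<subseteq> {1..sum_list (x # xs)}" unfolding B_def S_def by auto
  qed fact
  moreover have "card B = x" unfolding B_def by simp
  then have "card (insert B P) = length (x # xs)" "\<forall>C\<in>insert B P. card C \<in> set (x # xs)"
    "(\<Sum>C\<in>insert B P. g (card C)) = (\<Sum>y\<leftarrow>x # xs. g y)"
    using P \<open>finite P\<close> \<open>B \<notin> P\<close> by auto
  ultimately show ?case by blast
qed

lemma sum_card_sq_partition_le:
  assumes P: "partition_on A P" and "finite A" and "c > 0"
    and small: "\<forall>B\<in>P. card B \<le> c + 1"
  shows "(\<Sum>B\<in>P. card B ^ 2) + card P \<le> max_sq_sum c (card A - card P) + 2 * card A"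
proof -
  have "finite P" using P \<open>finite A\<close> finite_elements by blast
  have finB: "finite B" if "B \<in> P" for B
    using that partition_onD1[OF P] \<open>finite A\<close> by (metis Union_upper finite_subset)
  define y :: "'a set \<Rightarrow> nat" where "y B = card B - 1" for B
  have card_y: "card B = y B + 1" if "B \<in> P" for B
  proof -
    have "card B > 0" using partition_onD3[OF P] that finB[OF that] by (auto simp: card_gt_0_iff)
    then show ?thesis unfolding y_def by simp
  qed
  have "card A = (\<Sum>B\<in>P. card B)" using product_partition[OF P finB] by simp
  also have "\<dots> = (\<Sum>B\<in>P. y B + 1)" using card_y by simp
  also have "\<dots> = (\<Sum>B\<in>P. y B) + card P" by (simp only: sum.distrib) simp
  finally have card_A: "card A = (\<Sum>B\<in>P. y B) + card P" .
  have "(\<Sum>B\<in>P. card B ^ 2) = (\<Sum>B\<in>P. y B ^ 2 + 2 * y B + 1)"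
    using card_y by (intro sum.cong) (simp_all add: power2_eq_square)
  also have "\<dots> = (\<Sum>B\<in>P. y B ^ 2) + 2 * (\<Sum>B\<in>P. y B) + card P"
    by (simp only: sum.distrib sum_distrib_left) simp
  moreover have "(\<Sum>B\<in>P. y B ^ 2) \<le> max_sq_sum c (\<Sum>B\<in>P. y B)"
    using small \<open>c > 0\<close> unfolding y_def
    by (intro sum_squares_le_max_sq_sum[OF \<open>finite P\<close>]) auto
  ultimately show ?thesis unfolding card_A by simp
qed

lemma partition_attaining_max_sq_sum:
  assumes "a \<le> c * m"
  shows "\<exists>P. partition_on {1..a + m} P \<and> card P = m \<and> (\<forall>B\<in>P. card B \<le> c + 1)
           \<and> (\<Sum>B\<in>P. card B ^ 2) + m = max_sq_sum c a + 2 * (a + m)"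
proof -
  obtain ys where ys: "length ys = m" "\<forall>y\<in>set ys. y \<le> c" "sum_list ys = a"
    "(\<Sum>y\<leftarrow>ys. y^2) = max_sq_sum c a"
    using max_sq_sum_attained[OF assms] by blast
  have "sum_list (map Suc ys) = a + m" using ys sum_list_Suc[of "\<lambda>y. y" ys] by simp
  moreover have "(\<Sum>x\<leftarrow>map Suc ys. x^2) = max_sq_sum c a + 2 * a + m"
  proof -
    have "(\<Sum>x\<leftarrow>map Suc ys. x^2) = (\<Sum>y\<leftarrow>ys. y^2) + 2 * sum_list ys + length ys"
      by (induction ys) (auto simp: power2_eq_square)
    then show ?thesis using ys by simp
  qed
  moreover obtain P where "partition_on {1..sum_list (map Suc ys)} P" "card P = m"
    "\<forall>B\<in>P. card B \<in> set (map Suc ys)"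
    "(\<Sum>B\<in>P. card B ^ 2) = (\<Sum>x\<leftarrow>map Suc ys. x^2)"
    using partition_of_block_sizes[of "map Suc ys" "\<lambda>x. x^2"] ys(1) by auto
  ultimately show ?thesis using ys(2) by (intro exI[of _ P]) auto
qed

lemma f_part_eq:
  assumes "c > 0" "h \<le> N" "N - h \<le> c * h"
  shows "f_part N (c + 1) h + h = max_sq_sum c (N - h) + 2 * N"
proof -
  define T where "T = max_sq_sum c (N - h) + 2 * N - h"
  let ?F = "{(\<Sum>B\<in>P. card B ^ 2) | P.
    partition_on {1..N} P \<and> (\<forall>B\<in>P. card B \<le> c + 1) \<and> h \<le> card P}"
  have "?F \<subseteq> {..T}"
  proof
    fix s assume "s \<in> ?F"
    then obtain P where P: "partition_on {1..N} P" "\<forall>B\<in>P. card B \<le> c + 1" "h \<le> card P"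
      and s: "s = (\<Sum>B\<in>P. card B ^ 2)" by blast
    have "s + card P \<le> max_sq_sum c (N - card P) + 2 * N"
      using sum_card_sq_partition_le[OF P(1) _ \<open>c > 0\<close> P(2)] s by simp
    also have "\<dots> \<le> max_sq_sum c (N - h) + 2 * N"
      using max_sq_sum_mono[OF \<open>c > 0\<close>] P(3) by simp
    finally show "s \<in> {..T}" unfolding T_def using P(3) by simp
  qed
  moreover have "T \<in> ?F"
  proof -
    obtain P where "partition_on {1..N} P" "card P = h" "\<forall>B\<in>P. card B \<le> c + 1"
      "(\<Sum>B\<in>P. card B ^ 2) + h = max_sq_sum c (N - h) + 2 * N"
      using partition_attaining_max_sq_sum[OF assms(3)] assms(2) by auto
    then show ?thesis unfolding T_def by force
  qed
  ultimately have "f_part N (c + 1) h = T"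
    unfolding f_part_def by (intro Max_eqI) (auto intro: finite_subset)
  then show ?thesis unfolding T_def using assms(2) by simp
qed

theorem lemma1:
  fixes N w h :: nat
  assumes "N > 0" "w > 0" "h > 0" "w \<ge> 2"
    and "real N / real h \<le> real w"
    and "real w \<le> real N - real h + 1"
  shows "int (f_part N w h) =
           (let k = \<lfloor>(real N - real h) / (real w - 1)\<rfloor>;
                u = int N - int h + 1 - (int w - 1) * k;
                v = int h - k - 1
            in k * int w ^ 2 + u ^ 2 + v)"
proof -
  define c where "c = w - 1"
  define k where "k = (N - h) div c"
  define r where "r = (N - h) mod c"
  have w: "w = c + 1" and "c > 0" using assms(4) unfolding c_def by simp_all
  have "h \<le> N" using assms(4,6) by linarith
  have "real N \<le> real w * real h" using assms(3,5) by (simp add: divide_le_eq)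
  then have "N - h \<le> c * h" unfolding w by (simp add: algebra_simps flip: of_nat_mult)
  then have f: "f_part N w h + h = k * c^2 + r^2 + 2 * N"
    using f_part_eq[OF \<open>c > 0\<close> \<open>h \<le> N\<close>] unfolding w max_sq_sum_def k_def r_def by simp
  have "(real N - real h) / (real w - 1) = real (N - h) / real c"
    using \<open>h \<le> N\<close> unfolding w by simp
  then have floor: "\<lfloor>(real N - real h) / (real w - 1)\<rfloor> = int k"
    unfolding k_def by (simp add: floor_divide_of_nat_eq)
  have N: "int N = int k * int c + int r + int h"
    using \<open>h \<le> N\<close> unfolding k_def r_def by (simp flip: of_nat_mult of_nat_add)
  from arg_cong[OF f, of int] show ?thesis
    unfolding floor Let_def unfolding w by (simp add: N power2_eq_square algebra_simps)
qed

end
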